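(* Let $\Sigma$ be an oriented graph on $n$ vertices with skew adjacency matrix $S$ and walk-matrix $W=W(\Sigma)$, and suppose $W$ is nonsingular. Let $Q$ be a real orthogonal matrix with $Qe=e$ and $Q^{\mathrm T}SQ=S^{\mathrm T}$. Then $Q$ is symmetric. In particular, if $P$ is a permutation matrix with $P^{\mathrm T}SP=S^{\mathrm T}$, then $P$ is symmetric and $P^2=I_n$.
   Context: The skew adjacency matrix $S=(S_{ij})$ of an oriented graph on vertices $v_1,\dots,v_n$ has $S_{ij}=1$ if $(v_i,v_j)$ is a directed edge, $S_{ij}=-1$ if $(v_j,v_i)$ is a directed edge, and $S_{ij}=0$ otherwise. The walk-matrix is $W(\Sigma)=[e,Se,\ldots,S^{n-1}e]$ with $e$ the all-ones vector. *)

theory Defs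
  imports "Jordan_Normal_Form.Matrix" "Jordan_Normal_Form.Determinant"
begin

text \<open>An oriented graph on vertices 0..<n is a relation E (E i j means (v_i,v_j) is a
directed edge) that is irreflexive and has no pair of opposite arcs.\<close>
definition oriented_graph :: "nat \<Rightarrow> (nat \<Rightarrow> nat \<Rightarrow> bool) \<Rightarrow> bool" where
  "oriented_graph n E \<longleftrightarrow> (\<forall>i<n. \<not> E i i) \<and> (\<forall>i<n. \<forall>j<n. \<not> (E i j \<and> E j i))"

definition skew_adj :: "nat \<Rightarrow> (nat \<Rightarrow> nat \<Rightarrow> bool) \<Rightarrow> real mat" where
  "skew_adj n E = mat n n (\<lambda>(i,j). if E i j then 1 else if E j i then -1 else 0)"

definition ones_vec :: "nat \<Rightarrow> real vec" where
  "ones_vec n = vec n (\<lambda>_. 1)"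

definition walk_matrix :: "nat \<Rightarrow> real mat \<Rightarrow> real mat" where
  "walk_matrix n S = mat n n (\<lambda>(i,j). ((S ^\<^sub>m j) *\<^sub>v ones_vec n) $ i)"

definition real_orthogonal_mat :: "nat \<Rightarrow> real mat \<Rightarrow> bool" where
  "real_orthogonal_mat n Q \<longleftrightarrow> Q \<in> carrier_mat n n \<and> Q\<^sup>T * Q = 1\<^sub>m n"

definition permutation_mat :: "nat \<Rightarrow> real mat \<Rightarrow> bool" where
  "permutation_mat n P \<longleftrightarrow> (\<exists>\<sigma>. \<sigma> permutes {..<n} \<and>
     P = mat n n (\<lambda>(i,j). if \<sigma> i = j then 1 else 0))"

end

theory Submission
  imports Defs
begin

text \<open>Since \<open>\<Sigma>\<close> is oriented, \<open>S\<^sup>T = -S\<close>. Orthogonality turns \<open>Q\<^sup>T S Q = S\<^sup>T\<close> into the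
  intertwining relations \<open>Q S = S\<^sup>T Q\<close> and \<open>Q\<^sup>T S = S\<^sup>T Q\<^sup>T\<close>; as both \<open>Q\<close> and \<open>Q\<^sup>T\<close> fix \<open>e\<close>,
  they map every column \<open>S\<^sup>k e\<close> of the walk matrix to \<open>(S\<^sup>T)\<^sup>k e\<close>. Hence \<open>Q W = Q\<^sup>T W\<close>, and
  cancelling the nonsingular \<open>W\<close> gives \<open>Q = Q\<^sup>T\<close>.\<close>

lemma skew_adj_carrier [simp]: "skew_adj n E \<in> carrier_mat n n"
  by (simp add: skew_adj_def)

lemma ones_vec_carrier [simp]: "ones_vec n \<in> carrier_vec n"
  by (simp add: ones_vec_def)

lemma transpose_skew_adj:
  assumes "oriented_graph n E"
  shows "(skew_adj n E)\<^sup>T = - skew_adj n E"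
  using assms unfolding skew_adj_def oriented_graph_def by (intro eq_matI) auto

lemma col_walk_matrix:
  assumes "S \<in> carrier_mat n n" and "j < n"
  shows "col (walk_matrix n S) j = S ^\<^sub>m j *\<^sub>v ones_vec n"
  using assms by (intro eq_vecI) (auto simp: walk_matrix_def)

lemma mult_pow_mat_intertwine:
  fixes A B C :: "'a::semiring_1 mat"
  assumes A: "A \<in> carrier_mat n n" and B: "B \<in> carrier_mat n n" and C: "C \<in> carrier_mat n n"
    and AB: "A * B = C * A"
  shows "A * B ^\<^sub>m k = C ^\<^sub>m k * A"
proof (induction k)
  case 0
  show ?case using A B C by simp
next
  case (Suc k)
  have "A * B ^\<^sub>m Suc k = (A * B ^\<^sub>m k) * B"
    using A B by (simp add: assoc_mult_mat[of A n n _ n B n])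
  also have "\<dots> = C ^\<^sub>m k * (A * B)"
    using A B C by (simp add: Suc assoc_mult_mat[of _ n n A n B n])
  also have "\<dots> = C ^\<^sub>m Suc k * A"
    using A C by (simp add: AB assoc_mult_mat[of _ n n C n A n])
  finally show ?case .
qed

lemma mult_walk_matrix_intertwine:
  fixes X S T :: "real mat"
  assumes X: "X \<in> carrier_mat n n" and S: "S \<in> carrier_mat n n" and T: "T \<in> carrier_mat n n"
    and XS: "X * S = T * X" and Xe: "X *\<^sub>v ones_vec n = ones_vec n"
  shows "X * walk_matrix n S = walk_matrix n T"
proof (rule mat_col_eqI)
  have W: "walk_matrix n S \<in> carrier_mat n n" by (simp add: walk_matrix_def)
  fix j assume "j < dim_col (walk_matrix n T)"
  hence j: "j < n" by (simp add: walk_matrix_def)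
  have "col (X * walk_matrix n S) j = X *\<^sub>v (S ^\<^sub>m j *\<^sub>v ones_vec n)"
    unfolding col_mult2[OF X W j] col_walk_matrix[OF S j] ..
  also have "\<dots> = (X * S ^\<^sub>m j) *\<^sub>v ones_vec n"
    using X S by (intro assoc_mult_mat_vec[symmetric]) auto
  also have "\<dots> = T ^\<^sub>m j *\<^sub>v ones_vec n"
    using X T by (simp add: mult_pow_mat_intertwine[OF X S T XS] assoc_mult_mat_vec[of _ n n X n] Xe)
  finally show "col (X * walk_matrix n S) j = col (walk_matrix n T) j"
    by (simp add: col_walk_matrix[OF T j])
qed (use X in \<open>auto simp: walk_matrix_def\<close>)

lemma mult_right_cancel_det_nonzero:
  fixes A B W :: "'a::field mat"
  assumes A: "A \<in> carrier_mat n n" and B: "B \<in> carrier_mat n n" and W: "W \<in> carrier_mat n n"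
    and "det W \<noteq> 0" and AW: "A * W = B * W"
  shows "A = B"
proof -
  obtain V where V: "V \<in> carrier_mat n n" and WV: "W * V = 1\<^sub>m n"
    using det_non_zero_imp_unit[OF W \<open>det W \<noteq> 0\<close>, of undefined]
    unfolding Units_def ring_mat_def by auto
  have "A = (A * W) * V" using A W V WV by simp
  also have "\<dots> = (B * W) * V" by (simp add: AW)
  also have "\<dots> = B" using B W V WV by simp
  finally show ?thesis .
qed

lemma orthogonal_conj_intertwine:
  fixes Q S T :: "real mat"
  assumes Q: "real_orthogonal_mat n Q" and S: "S \<in> carrier_mat n n"
    and QSQ: "Q\<^sup>T * S * Q = T"
  shows "S * Q = Q * T" and "Q\<^sup>T * S = T * Q\<^sup>T"
proof -
  have Qc: "Q \<in> carrier_mat n n" and QTQ: "Q\<^sup>T * Q = 1\<^sub>m n"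
    using Q by (auto simp: real_orthogonal_mat_def)
  have QTc: "Q\<^sup>T \<in> carrier_mat n n" using Qc by simp
  have QQT: "Q * Q\<^sup>T = 1\<^sub>m n" by (rule mat_mult_left_right_inverse[OF QTc Qc QTQ])
  have "Q * T = (Q * Q\<^sup>T) * S * Q"
    using Qc S by (simp add: QSQ[symmetric] assoc_mult_mat[of _ n n _ n _ n])
  thus "S * Q = Q * T" using QQT S by simp
  have "T * Q\<^sup>T = (Q\<^sup>T * S) * (Q * Q\<^sup>T)"
    using Qc S by (simp add: QSQ[symmetric] assoc_mult_mat[of _ n n _ n _ n])
  thus "Q\<^sup>T * S = T * Q\<^sup>T" using QQT S by simp
qed

lemma orthogonal_fixes_ones_transpose:
  assumes Q: "real_orthogonal_mat n Q" and Qe: "Q *\<^sub>v ones_vec n = ones_vec n"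
  shows "Q\<^sup>T *\<^sub>v ones_vec n = ones_vec n"
proof -
  have Qc: "Q \<in> carrier_mat n n" and QTQ: "Q\<^sup>T * Q = 1\<^sub>m n"
    using Q by (auto simp: real_orthogonal_mat_def)
  have "Q\<^sup>T *\<^sub>v ones_vec n = (Q\<^sup>T * Q) *\<^sub>v ones_vec n"
    using Qc by (simp add: Qe)
  thus ?thesis by (simp add: QTQ)
qed

lemma permutation_mat_orthogonal_fixes_ones:
  assumes "permutation_mat n P"
  shows "real_orthogonal_mat n P" and "P *\<^sub>v ones_vec n = ones_vec n"
proof -
  obtain \<sigma> where \<sigma>: "\<sigma> permutes {..<n}"
    and P: "P = mat n n (\<lambda>(i,j). if \<sigma> i = j then 1 else 0)"
    using assms unfolding permutation_mat_def by auto
  have \<sigma>_in: "\<And>i. i < n \<Longrightarrow> \<sigma> i < n" using permutes_in_image[OF \<sigma>] by simp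
  have "P\<^sup>T * P = 1\<^sub>m n"
  proof (rule eq_matI)
    fix i j assume "i < dim_row (1\<^sub>m n)" "j < dim_col (1\<^sub>m n)"
    hence ij: "i < n" "j < n" by auto
    have "(P\<^sup>T * P) $$ (i,j) = (\<Sum>k<n. (if \<sigma> k = i then 1 else 0) * (if \<sigma> k = j then 1 else (0::real)))"
      using ij by (simp add: P scalar_prod_def atLeast0LessThan)
    also have "\<dots> = (\<Sum>k<n. (if k = i then 1 else 0) * (if k = j then 1 else (0::real)))"
      using sum.reindex_bij_betw[OF permutes_imp_bij[OF \<sigma>],
          of "\<lambda>k. (if k = i then 1 else 0) * (if k = j then 1 else (0::real))"] by simp
    also have "\<dots> = (\<Sum>k<n. if k = i then (if i = j then 1 else 0) else (0::real))"
      by (intro sum.cong) auto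
    also have "\<dots> = 1\<^sub>m n $$ (i,j)" using ij by simp
    finally show "(P\<^sup>T * P) $$ (i,j) = 1\<^sub>m n $$ (i,j)" .
  qed (auto simp: P)
  thus "real_orthogonal_mat n P" by (simp add: real_orthogonal_mat_def P)
  show "P *\<^sub>v ones_vec n = ones_vec n"
  proof (rule eq_vecI)
    fix i assume "i < dim_vec (ones_vec n)"
    hence i: "i < n" by (simp add: ones_vec_def)
    have "(P *\<^sub>v ones_vec n) $ i = (\<Sum>j<n. if \<sigma> i = j then 1 else (0::real))"
      using i by (simp add: P mult_mat_vec_def scalar_prod_def ones_vec_def atLeast0LessThan)
    also have "\<dots> = 1" using \<sigma>_in[OF i] by simp
    finally show "(P *\<^sub>v ones_vec n) $ i = ones_vec n $ i" using i by (simp add: ones_vec_def)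
  qed (simp add: P ones_vec_def)
qed

lemma symmetric_orthogonal_involution:
  assumes "real_orthogonal_mat n Q" and "Q\<^sup>T = Q"
  shows "Q * Q = 1\<^sub>m n"
  using assms unfolding real_orthogonal_mat_def by metis

lemma orthogonal_skew_reversal_symmetric:
  assumes og: "oriented_graph n E"
    and dW: "det (walk_matrix n (skew_adj n E)) \<noteq> 0"
    and Q: "real_orthogonal_mat n Q" and Qe: "Q *\<^sub>v ones_vec n = ones_vec n"
    and QSQ: "Q\<^sup>T * skew_adj n E * Q = (skew_adj n E)\<^sup>T"
  shows "Q\<^sup>T = Q"
proof -
  define S where "S = skew_adj n E"
  define W where "W = walk_matrix n S"
  have S: "S \<in> carrier_mat n n" and ST: "S\<^sup>T = - S"
    using transpose_skew_adj[OF og] by (simp_all add: S_def)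
  have STc: "S\<^sup>T \<in> carrier_mat n n" using S by simp
  have Qc: "Q \<in> carrier_mat n n" using Q by (simp add: real_orthogonal_mat_def)
  have QTc: "Q\<^sup>T \<in> carrier_mat n n" using Qc by simp
  note intertwine = orthogonal_conj_intertwine[OF Q S QSQ[folded S_def]]
  have "S * Q = - (Q * S)" using intertwine(1) Qc S by (simp add: ST)
  hence QS: "Q * S = S\<^sup>T * Q" using Qc S by (simp add: ST)
  have "Q * W = walk_matrix n S\<^sup>T"
    unfolding W_def by (rule mult_walk_matrix_intertwine[OF Qc S STc QS Qe])
  also have "\<dots> = Q\<^sup>T * W"
    unfolding W_def using orthogonal_fixes_ones_transpose[OF Q Qe]
    by (rule mult_walk_matrix_intertwine[OF QTc S STc intertwine(2), symmetric])
  finally show ?thesis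
    using dW by (intro mult_right_cancel_det_nonzero[OF QTc Qc, of W])
      (simp_all add: W_def S_def walk_matrix_def)
qed

theorem lemma2p10:
  fixes n :: nat and E :: "nat \<Rightarrow> nat \<Rightarrow> bool"
  assumes "oriented_graph n E"
    and "det (walk_matrix n (skew_adj n E)) \<noteq> 0"
  shows "(\<forall>Q. real_orthogonal_mat n Q \<and> Q *\<^sub>v ones_vec n = ones_vec n
             \<and> Q\<^sup>T * skew_adj n E * Q = (skew_adj n E)\<^sup>T \<longrightarrow> Q\<^sup>T = Q)
      \<and> (\<forall>P. permutation_mat n P \<and> P\<^sup>T * skew_adj n E * P = (skew_adj n E)\<^sup>T
             \<longrightarrow> P\<^sup>T = P \<and> P * P = 1\<^sub>m n)"
proof (intro conjI allI impI; elim conjE)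
  fix Q assume "real_orthogonal_mat n Q" "Q *\<^sub>v ones_vec n = ones_vec n"
    "Q\<^sup>T * skew_adj n E * Q = (skew_adj n E)\<^sup>T"
  thus "Q\<^sup>T = Q" by (rule orthogonal_skew_reversal_symmetric[OF assms])
next
  fix P assume "permutation_mat n P" and PSP: "P\<^sup>T * skew_adj n E * P = (skew_adj n E)\<^sup>T"
  note P = permutation_mat_orthogonal_fixes_ones[OF \<open>permutation_mat n P\<close>]
  show sym: "P\<^sup>T = P" by (rule orthogonal_skew_reversal_symmetric[OF assms P PSP])
  show "P * P = 1\<^sub>m n" by (rule symmetric_orthogonal_involution[OF P(1) sym])
qed

end
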